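(* Let $G=(V,E)$ be a graph with $\mathrm{nd}(G)=\nu$, and let $\alpha_1,\dots,\alpha_\ell$ be local linear cardinality constraints. Then there exist a neighbourhood decomposition $\mathcal{T}$ of $G$ with $|\mathcal{T}|\le\nu 4^\ell$ and local linear cardinality constraints $\alpha'_1,\dots,\alpha'_\ell$ such that: - each $\alpha'_i$ is uniform with respect to $\mathcal{T}$ (every type of $\mathcal{T}$ is uniform with respect to every $\alpha'_i$); - for every tuple $(X_1,\dots,X_\ell)$ of subsets of $V$: $X_i$ satisfies $\alpha_i$ for all $i\in[\ell]$ if and only if $X_i$ satisfies $\alpha'_i$ for all $i\in[\ell]$.
   Context: Neighbourhood decompositions: - Two vertices $u,v$ have the same neighbourhood type if $N(u)\setminus\{v\}=N(v)\setminus\{u\}$. - A neighbourhood decomposition is a partition of $V$ into classes ("types") of pairwise same-type vertices. - $\mathrm{nd}(G)$ is the minimum size of a neighbourhood decomposition. Local linear cardinality constraints: - A local linear cardinality constraint is a map $\alpha$ assigning to each $v\in V$ an integer interval $\alpha(v)=\{l_v,\dots,u_v\}\subseteq\{0,\dots,|V|\}$, possibly empty. - $X\subseteq V$ satisfies $\alpha$ if $|X\cap N(v)|\in\alpha(v)$ for all $v$. - A type $T$ is uniform with respect to $\alpha$ if $\alpha$ is constant on $T$. *)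

theory Defs
  imports Main
begin

definition graph :: "'a set \<Rightarrow> ('a \<Rightarrow> 'a \<Rightarrow> bool) \<Rightarrow> bool" where
  "graph V E \<longleftrightarrow> finite V \<and> (\<forall>u v. E u v \<longrightarrow> u \<in> V \<and> v \<in> V)
     \<and> (\<forall>u v. E u v \<longrightarrow> E v u) \<and> (\<forall>v. \<not> E v v)"

definition nbh :: "'a set \<Rightarrow> ('a \<Rightarrow> 'a \<Rightarrow> bool) \<Rightarrow> 'a \<Rightarrow> 'a set" where
  "nbh V E v = {u \<in> V. E v u}"

definition same_type :: "'a set \<Rightarrow> ('a \<Rightarrow> 'a \<Rightarrow> bool) \<Rightarrow> 'a \<Rightarrow> 'a \<Rightarrow> bool" where
  "same_type V E u v \<longleftrightarrow> nbh V E u - {v} = nbh V E v - {u}"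

definition nbh_decomp :: "'a set \<Rightarrow> ('a \<Rightarrow> 'a \<Rightarrow> bool) \<Rightarrow> 'a set set \<Rightarrow> bool" where
  "nbh_decomp V E \<T> \<longleftrightarrow> \<Union>\<T> = V \<and> {} \<notin> \<T>
     \<and> (\<forall>T1\<in>\<T>. \<forall>T2\<in>\<T>. T1 \<noteq> T2 \<longrightarrow> T1 \<inter> T2 = {})
     \<and> (\<forall>T\<in>\<T>. \<forall>u\<in>T. \<forall>v\<in>T. same_type V E u v)"

definition nd :: "'a set \<Rightarrow> ('a \<Rightarrow> 'a \<Rightarrow> bool) \<Rightarrow> nat" where
  "nd V E = (LEAST k. \<exists>\<T>. nbh_decomp V E \<T> \<and> card \<T> = k)"

definition llcc :: "'a set \<Rightarrow> ('a \<Rightarrow> nat set) \<Rightarrow> bool" where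
  "llcc V \<alpha> \<longleftrightarrow> (\<forall>v\<in>V. \<exists>l u. \<alpha> v = {l..u} \<and> \<alpha> v \<subseteq> {0..card V})"

definition satisfies :: "'a set \<Rightarrow> ('a \<Rightarrow> 'a \<Rightarrow> bool) \<Rightarrow> 'a set \<Rightarrow> ('a \<Rightarrow> nat set) \<Rightarrow> bool" where
  "satisfies V E X \<alpha> \<longleftrightarrow> (\<forall>v\<in>V. card (X \<inter> nbh V E v) \<in> \<alpha> v)"

definition uniform :: "'a set \<Rightarrow> ('a \<Rightarrow> nat set) \<Rightarrow> bool" where
  "uniform T \<alpha> \<longleftrightarrow> (\<forall>u\<in>T. \<forall>v\<in>T. \<alpha> u = \<alpha> v)"

end

theory Submission
  imports Defs
begin

text \<open>Within one neighbourhood type the counts \<open>|X \<inter> N(v)|\<close> differ by at most one.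
  On a type \<open>T\<close> let \<open>L\<close> be the largest lower bound and \<open>H\<close> the smallest upper bound
  of a constraint. A lower bound \<open>l\<^sub>v < L\<close> is implied by the bound \<open>L\<close> at a vertex
  attaining it, as \<open>|X \<inter> N(v)| \<ge> L - 1 \<ge> l\<^sub>v\<close>; symmetrically for upper bounds. So the
  interval of \<open>v\<close> may be replaced by \<open>[L or 0, H or |V|]\<close>, according to whether \<open>v\<close>
  attains \<open>L\<close> and \<open>H\<close>. Splitting every type of an optimal decomposition by these
  \<open>4\<^sup>\<ell>\<close> attainment patterns makes the new constraints uniform. If some interval is
  empty, no tuple satisfies the constraints, and all intervals may be taken empty.\<close>

lemma nbh_decomp_nd_exists:
  assumes "graph V E"
  shows "\<exists>\<T>. nbh_decomp V E \<T> \<and> card \<T> = nd V E"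
proof -
  have "nbh_decomp V E ((\<lambda>v. {v}) ` V)"
    unfolding nbh_decomp_def same_type_def by auto
  then have "\<exists>k \<T>. nbh_decomp V E \<T> \<and> card \<T> = k" by blast
  then show ?thesis
    unfolding nd_def by (rule LeastI_ex)
qed

lemma card_Int_nbh_le_Suc_if_same_type:
  assumes "graph V E" "same_type V E u v"
  shows "card (X \<inter> nbh V E u) \<le> card (X \<inter> nbh V E v) + 1"
proof -
  have fin: "finite (X \<inter> nbh V E v)"
    using assms(1) unfolding graph_def nbh_def by auto
  have "X \<inter> nbh V E u \<subseteq> insert v (X \<inter> nbh V E v)"
    using assms(2) unfolding same_type_def by blast
  then have "card (X \<inter> nbh V E u) \<le> card (insert v (X \<inter> nbh V E v))"
    using fin by (intro card_mono) auto
  also have "\<dots> \<le> card (X \<inter> nbh V E v) + 1"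
    using fin by (simp add: card_insert_if)
  finally show ?thesis .
qed

lemma card_Int_nbh_le_card:
  assumes "graph V E"
  shows "card (X \<inter> nbh V E v) \<le> card V"
  using assms unfolding graph_def nbh_def by (intro card_mono) auto

lemma bounds_iff_extremal_bounds:
  fixes c lo hi :: "'a \<Rightarrow> nat"
  assumes "finite S" and step: "\<forall>u\<in>S. \<forall>w\<in>S. c u \<le> c w + 1"
  shows "(\<forall>v\<in>S. lo v \<le> c v \<and> c v \<le> hi v) \<longleftrightarrow>
    (\<forall>v\<in>S. (lo v = Max (lo ` S) \<longrightarrow> Max (lo ` S) \<le> c v)
         \<and> (hi v = Min (hi ` S) \<longrightarrow> c v \<le> Min (hi ` S)))"
    (is "?bounds \<longleftrightarrow> ?extremal")
proof
  assume ?bounds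
  then show ?extremal by auto
next
  assume ext: ?extremal
  show ?bounds
  proof
    fix v assume v: "v \<in> S"
    obtain w where w: "w \<in> S" "lo w = Max (lo ` S)"
      using Max_in[of "lo ` S"] assms(1) v by fastforce
    obtain z where z: "z \<in> S" "hi z = Min (hi ` S)"
      using Min_in[of "hi ` S"] assms(1) v by fastforce
    have "lo v \<le> lo w" "hi z \<le> hi v"
      using assms(1) v w z by auto
    moreover have "lo w \<le> c w" "c z \<le> hi z"
      using ext w z by auto
    moreover have "c w \<le> c v + 1" "c v \<le> c z + 1"
      using step v w z by auto
    moreover have "lo v = lo w \<Longrightarrow> lo v \<le> c v" "hi v = hi z \<Longrightarrow> c v \<le> hi v"
      using ext v w z by auto
    ultimately show "lo v \<le> c v \<and> c v \<le> hi v"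
      by (metis Suc_eq_plus1 le_antisym not_less_eq_eq order.trans)
  qed
qed

lemma llcc_eq_Min_Max:
  assumes "llcc V \<alpha>" "v \<in> V" "\<alpha> v \<noteq> {}"
  shows "\<alpha> v = {Min (\<alpha> v)..Max (\<alpha> v)}"
proof -
  obtain a b where ab: "\<alpha> v = {a..b}"
    using assms(1,2) unfolding llcc_def by blast
  with assms(3) have "a \<le> b" by simp
  then have "Min {a..b} = a" "Max {a..b} = b"
    by (auto intro: Min_eqI Max_eqI)
  with ab show ?thesis by simp
qed

lemma llcc_Max_le_card:
  assumes "llcc V \<alpha>" "v \<in> V" "\<alpha> v \<noteq> {}"
  shows "Max (\<alpha> v) \<le> card V"
  using assms llcc_eq_Min_Max[OF assms] unfolding llcc_def
  by (metis Max_in atLeastAtMost_iff finite_atLeastAtMost subset_iff)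

lemma nbh_decompD:
  assumes "nbh_decomp V E \<T>"
  shows "\<Union>\<T> = V"
    and "T\<^sub>1 \<in> \<T> \<Longrightarrow> T\<^sub>2 \<in> \<T> \<Longrightarrow> T\<^sub>1 \<noteq> T\<^sub>2 \<Longrightarrow> T\<^sub>1 \<inter> T\<^sub>2 = {}"
    and "T \<in> \<T> \<Longrightarrow> u \<in> T \<Longrightarrow> v \<in> T \<Longrightarrow> same_type V E u v"
  using assms unfolding nbh_decomp_def by blast+

lemma finite_nbh_decomp:
  assumes "graph V E" "nbh_decomp V E \<T>"
  shows "finite \<T>" and "T \<in> \<T> \<Longrightarrow> finite T"
proof -
  have "finite V"
    using assms(1) unfolding graph_def by blast
  then show "finite \<T>" "T \<in> \<T> \<Longrightarrow> finite T"
    using nbh_decompD(1)[OF assms(2)] by (metis finite_UnionD, metis Union_upper finite_subset)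
qed

definition part_of :: "'a set set \<Rightarrow> 'a \<Rightarrow> 'a set" where
  "part_of \<T> u = (THE T. T \<in> \<T> \<and> u \<in> T)"

lemma part_of_eq:
  assumes "nbh_decomp V E \<T>" "T \<in> \<T>" "u \<in> T"
  shows "part_of \<T> u = T"
  unfolding part_of_def
  by (rule the_equality) (use assms nbh_decompD(2)[OF assms(1)] in blast)+

lemma part_of_in:
  assumes "nbh_decomp V E \<T>" "u \<in> V"
  shows "part_of \<T> u \<in> \<T>" "u \<in> part_of \<T> u"
proof -
  obtain T where "T \<in> \<T>" "u \<in> T"
    using assms nbh_decompD(1)[OF assms(1)] by blast
  then show "part_of \<T> u \<in> \<T>" "u \<in> part_of \<T> u"
    using part_of_eq[OF assms(1)] by auto
qed

lemma ball_part_of_iff: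
  assumes "nbh_decomp V E \<T>"
  shows "(\<forall>v\<in>V. P (part_of \<T> v) v) \<longleftrightarrow> (\<forall>T\<in>\<T>. \<forall>v\<in>T. P T v)"
proof -
  have "(\<forall>v\<in>V. P (part_of \<T> v) v) \<longleftrightarrow> (\<forall>T\<in>\<T>. \<forall>v\<in>T. P (part_of \<T> v) v)"
    using nbh_decompD(1)[OF assms] by blast
  also have "\<dots> \<longleftrightarrow> (\<forall>T\<in>\<T>. \<forall>v\<in>T. P T v)"
    using part_of_eq[OF assms] by simp
  finally show ?thesis .
qed

lemma same_type_if_part_of_eq:
  assumes "nbh_decomp V E \<T>" "u \<in> V" "v \<in> V" "part_of \<T> u = part_of \<T> v"
  shows "same_type V E u v"
  using part_of_in[OF assms(1,2)] part_of_in[OF assms(1,3)] assms(4)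
  by (metis nbh_decompD(3)[OF assms(1)])

definition fibres :: "'a set \<Rightarrow> ('a \<Rightarrow> 'b) \<Rightarrow> 'a set set" where
  "fibres V g = (\<lambda>y. {v \<in> V. g v = y}) ` g ` V"

lemma nbh_decomp_fibres:
  assumes "\<forall>u\<in>V. \<forall>v\<in>V. g u = g v \<longrightarrow> same_type V E u v"
  shows "nbh_decomp V E (fibres V g)"
  using assms unfolding nbh_decomp_def fibres_def by auto

lemma card_fibres_le:
  assumes "finite V"
  shows "card (fibres V g) \<le> card (g ` V)"
  unfolding fibres_def using assms by (intro card_image_le) simp

lemma uniform_fibre:
  assumes "\<forall>u\<in>V. \<forall>v\<in>V. g u = g v \<longrightarrow> \<alpha> u = \<alpha> v" "T \<in> fibres V g"
  shows "uniform T \<alpha>"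
proof -
  obtain w where "T = {v \<in> V. g v = g w}"
    using assms(2) unfolding fibres_def by blast
  then have "u \<in> V \<and> v \<in> V \<and> g u = g v" if "u \<in> T" "v \<in> T" for u v
    using that by simp
  then show ?thesis
    using assms(1) unfolding uniform_def by metis
qed

definition class_lower :: "'a set set \<Rightarrow> ('a \<Rightarrow> nat set) \<Rightarrow> 'a \<Rightarrow> nat" where
  "class_lower \<T> \<alpha> u = Max ((\<lambda>w. Min (\<alpha> w)) ` part_of \<T> u)"

definition class_upper :: "'a set set \<Rightarrow> ('a \<Rightarrow> nat set) \<Rightarrow> 'a \<Rightarrow> nat" where
  "class_upper \<T> \<alpha> u = Min ((\<lambda>w. Max (\<alpha> w)) ` part_of \<T> u)"

definition extremal_pattern :: "'a set set \<Rightarrow> ('a \<Rightarrow> nat set) \<Rightarrow> 'a \<Rightarrow> bool \<times> bool" where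
  "extremal_pattern \<T> \<alpha> u = (Min (\<alpha> u) = class_lower \<T> \<alpha> u, Max (\<alpha> u) = class_upper \<T> \<alpha> u)"

definition tightened :: "'a set \<Rightarrow> 'a set set \<Rightarrow> ('a \<Rightarrow> nat set) \<Rightarrow> 'a \<Rightarrow> nat set" where
  "tightened V \<T> \<alpha> u =
    {(if fst (extremal_pattern \<T> \<alpha> u) then class_lower \<T> \<alpha> u else 0) ..
     (if snd (extremal_pattern \<T> \<alpha> u) then class_upper \<T> \<alpha> u else card V)}"

lemma tightened_eq:
  assumes "part_of \<T> u = part_of \<T> v" "extremal_pattern \<T> \<alpha> u = extremal_pattern \<T> \<alpha> v"
  shows "tightened V \<T> \<alpha> u = tightened V \<T> \<alpha> v"
  using assms unfolding tightened_def class_lower_def class_upper_def by simp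

lemma llcc_tightened:
  assumes "graph V E" "nbh_decomp V E \<T>" "llcc V \<alpha>" "\<forall>v\<in>V. \<alpha> v \<noteq> {}"
  shows "llcc V (tightened V \<T> \<alpha>)"
proof -
  have "class_upper \<T> \<alpha> u \<le> card V" if "u \<in> V" for u
  proof -
    have "finite (part_of \<T> u)"
      using finite_nbh_decomp(2)[OF assms(1,2) part_of_in(1)[OF assms(2) that]] .
    then have "class_upper \<T> \<alpha> u \<le> Max (\<alpha> u)"
      unfolding class_upper_def using part_of_in(2)[OF assms(2) that] by simp
    also have "\<dots> \<le> card V"
      using llcc_Max_le_card[OF assms(3) that] assms(4) that by blast
    finally show ?thesis .
  qed
  then show ?thesis
    unfolding llcc_def tightened_def by auto
qed

lemma satisfies_tightened_iff:
  assumes "graph V E" "nbh_decomp V E \<T>" "llcc V \<alpha>" "\<forall>v\<in>V. \<alpha> v \<noteq> {}"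
  shows "satisfies V E X (tightened V \<T> \<alpha>) \<longleftrightarrow> satisfies V E X \<alpha>"
proof -
  define c where "c = (\<lambda>v. card (X \<inter> nbh V E v))"
  define lo where "lo = (\<lambda>v. Min (\<alpha> v))"
  define hi where "hi = (\<lambda>v. Max (\<alpha> v))"
  define extremal_bounds where "extremal_bounds T v \<longleftrightarrow>
      (lo v = Max (lo ` T) \<longrightarrow> Max (lo ` T) \<le> c v) \<and> (hi v = Min (hi ` T) \<longrightarrow> c v \<le> Min (hi ` T))"
    for T v
  have "satisfies V E X (tightened V \<T> \<alpha>) \<longleftrightarrow> (\<forall>v\<in>V. extremal_bounds (part_of \<T> v) v)"
    using card_Int_nbh_le_card[OF assms(1)]
    unfolding satisfies_def tightened_def extremal_pattern_def class_lower_def class_upper_def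
      extremal_bounds_def lo_def hi_def c_def
    by auto
  also have "\<dots> \<longleftrightarrow> (\<forall>T\<in>\<T>. \<forall>v\<in>T. extremal_bounds T v)"
    by (rule ball_part_of_iff[OF assms(2)])
  also have "\<dots> \<longleftrightarrow> (\<forall>T\<in>\<T>. \<forall>v\<in>T. lo v \<le> c v \<and> c v \<le> hi v)"
    unfolding extremal_bounds_def
  proof (rule ball_cong[OF refl], rule bounds_iff_extremal_bounds[symmetric])
    fix T assume T: "T \<in> \<T>"
    then show "finite T"
      by (rule finite_nbh_decomp(2)[OF assms(1,2)])
    show "\<forall>u\<in>T. \<forall>w\<in>T. c u \<le> c w + 1"
      using nbh_decompD(3)[OF assms(2) T] card_Int_nbh_le_Suc_if_same_type[OF assms(1)]
      unfolding c_def by blast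
  qed
  also have "\<dots> \<longleftrightarrow> (\<forall>v\<in>V. lo v \<le> c v \<and> c v \<le> hi v)"
    by (rule ball_part_of_iff[OF assms(2), symmetric])
  also have "\<dots> \<longleftrightarrow> satisfies V E X \<alpha>"
  proof -
    have "\<alpha> v = {lo v..hi v}" if "v \<in> V" for v
      using llcc_eq_Min_Max[OF assms(3) that] assms(4) that unfolding lo_def hi_def by blast
    then show ?thesis
      unfolding satisfies_def c_def by simp
  qed
  finally show ?thesis .
qed

lemma card_type_times_patterns:
  assumes "finite \<T>"
  shows "card (\<T> \<times> {ps :: (bool \<times> bool) list. length ps = l}) = card \<T> * 4 ^ l"
proof -
  have "card (UNIV :: (bool \<times> bool) set) = 4"
    by (simp add: UNIV_Times_UNIV[symmetric] card_cartesian_product del: UNIV_Times_UNIV)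
  then show ?thesis
    using card_lists_length_eq[of "UNIV :: (bool \<times> bool) set" l]
    by (simp add: card_cartesian_product)
qed

lemma uniform_refinement_of_tightened:
  assumes "graph V E" "nbh_decomp V E \<T>\<^sub>0"
  shows "\<exists>\<T>. nbh_decomp V E \<T> \<and> card \<T> \<le> card \<T>\<^sub>0 * 4 ^ l
           \<and> (\<forall>i<l. \<forall>T\<in>\<T>. uniform T (tightened V \<T>\<^sub>0 (\<alpha> i)))"
proof -
  define g where "g u = (part_of \<T>\<^sub>0 u, map (\<lambda>i. extremal_pattern \<T>\<^sub>0 (\<alpha> i) u) [0..<l])" for u
  have g_eq: "part_of \<T>\<^sub>0 u = part_of \<T>\<^sub>0 v \<and> extremal_pattern \<T>\<^sub>0 (\<alpha> i) u = extremal_pattern \<T>\<^sub>0 (\<alpha> i) v"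
    if "g u = g v" "i < l" for u v i
    using that map_eq_conv[of _ "[0..<l]"] unfolding g_def by auto
  have "finite V"
    using assms(1) unfolding graph_def by blast
  have "g ` V \<subseteq> \<T>\<^sub>0 \<times> {ps. length ps = l}"
    using part_of_in(1)[OF assms(2)] unfolding g_def by auto
  moreover have "finite {ps :: (bool \<times> bool) list. length ps = l}"
    using finite_lists_length_eq[of "UNIV :: (bool \<times> bool) set" l] by simp
  ultimately have "card (g ` V) \<le> card (\<T>\<^sub>0 \<times> {ps :: (bool \<times> bool) list. length ps = l})"
    using finite_nbh_decomp(1)[OF assms] by (metis card_mono finite_SigmaI)
  then have "card (fibres V g) \<le> card \<T>\<^sub>0 * 4 ^ l"
    using card_fibres_le[OF \<open>finite V\<close>, of g] card_type_times_patterns[OF finite_nbh_decomp(1)[OF assms], of l]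
    by linarith
  moreover have "nbh_decomp V E (fibres V g)"
    using same_type_if_part_of_eq[OF assms(2)] g_def by (intro nbh_decomp_fibres) simp
  moreover have "uniform T (tightened V \<T>\<^sub>0 (\<alpha> i))" if "i < l" "T \<in> fibres V g" for i T
  proof (rule uniform_fibre[OF _ that(2)], intro ballI impI)
    fix u v assume "g u = g v"
    with g_eq[OF this that(1)] show "tightened V \<T>\<^sub>0 (\<alpha> i) u = tightened V \<T>\<^sub>0 (\<alpha> i) v"
      by (intro tightened_eq) simp_all
  qed
  ultimately show ?thesis by blast
qed

theorem mainTheorem11:
  fixes V :: "'a set" and E :: "'a \<Rightarrow> 'a \<Rightarrow> bool"
    and l :: nat and \<nu> :: nat and \<alpha> :: "nat \<Rightarrow> 'a \<Rightarrow> nat set"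
  assumes "graph V E"
    and "nd V E = \<nu>"
    and "\<forall>i<l. llcc V (\<alpha> i)"
  shows "\<exists>\<T> \<alpha>'. nbh_decomp V E \<T> \<and> card \<T> \<le> \<nu> * 4 ^ l
           \<and> (\<forall>i<l. llcc V (\<alpha>' i))
           \<and> (\<forall>i<l. \<forall>T\<in>\<T>. uniform T (\<alpha>' i))
           \<and> (\<forall>X :: nat \<Rightarrow> 'a set. (\<forall>i<l. X i \<subseteq> V) \<longrightarrow>
                ((\<forall>i<l. satisfies V E (X i) (\<alpha> i)) \<longleftrightarrow>
                 (\<forall>i<l. satisfies V E (X i) (\<alpha>' i))))"
proof -
  obtain \<T>\<^sub>0 where \<T>\<^sub>0: "nbh_decomp V E \<T>\<^sub>0" "card \<T>\<^sub>0 = \<nu>"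
    using nbh_decomp_nd_exists[OF assms(1)] assms(2) by blast
  show ?thesis
  proof (cases "\<exists>i<l. \<exists>v\<in>V. \<alpha> i v = {}")
    case True
    then obtain i\<^sub>0 v\<^sub>0 where "i\<^sub>0 < l" "v\<^sub>0 \<in> V" "\<alpha> i\<^sub>0 v\<^sub>0 = {}" by blast
    then have "\<not> satisfies V E Y (\<alpha> i\<^sub>0)" "\<not> satisfies V E Y (\<lambda>_. {})" for Y
      unfolding satisfies_def by auto
    moreover have "llcc V (\<lambda>_. {})"
      unfolding llcc_def by (intro ballI exI[of _ 1] exI[of _ 0]) auto
    ultimately show ?thesis
      using \<T>\<^sub>0 \<open>i\<^sub>0 < l\<close> by (intro exI[of _ \<T>\<^sub>0] exI[of _ "\<lambda>_ _. {}"]) (auto simp: uniform_def)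
  next
    case False
    obtain \<T> where "nbh_decomp V E \<T>" "card \<T> \<le> \<nu> * 4 ^ l"
        "\<forall>i<l. \<forall>T\<in>\<T>. uniform T (tightened V \<T>\<^sub>0 (\<alpha> i))"
      using uniform_refinement_of_tightened[OF assms(1) \<T>\<^sub>0(1)] \<T>\<^sub>0(2) by blast
    then show ?thesis
      using llcc_tightened[OF assms(1) \<T>\<^sub>0(1)] satisfies_tightened_iff[OF assms(1) \<T>\<^sub>0(1)] assms(3) False
      by (intro exI[of _ \<T>] exI[of _ "\<lambda>i. tightened V \<T>\<^sub>0 (\<alpha> i)"]) auto
  qed
qed

end
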